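(* Let $\mathbb{K}\in\{\mathbb{R},\mathbb{C}\}$, $\mathbf{R}_U\in\mathbb{K}^{n\times n}$ self-adjoint positive definite, $U:=\mathbb{K}^n$ with $\langle\mathbf{x},\mathbf{y}\rangle_U:=\langle\mathbf{R}_U\mathbf{x},\mathbf{y}\rangle$ and norm $\|\cdot\|_U$. Fix $\mu$, $\mathbf{A}(\mu)\in\mathbb{K}^{n\times n}$, $\mathbf{b}(\mu)\in\mathbb{K}^n$, $\mathbf{u}(\mu)$ with $\mathbf{A}(\mu)\mathbf{u}(\mu)=\mathbf{b}(\mu)$, a subspace $U_r\subseteq U$, and $\mathbf{\Theta}\in\mathbb{K}^{k\times n}$. For $\mathbf{y}\in\mathbb{K}^n$ let $$\|\mathbf{y}\|_{U_r'}^{\mathbf{\Theta}}:=\max_{\mathbf{x}\in U_r\setminus\{\mathbf{0}\}}\frac{|\langle\mathbf{\Theta}\mathbf{R}_U^{-1}\mathbf{y},\mathbf{\Theta}\mathbf{x}\rangle|}{\|\mathbf{\Theta}\mathbf{x}\|},$$ $$\alpha_r^{\mathbf{\Theta}}(\mu):=\min_{\mathbf{x}\in U_r\setminus\{\mathbf{0}\}}\frac{\|\mathbf{A}(\mu)\mathbf{x}\|_{U_r'}^{\mathbf{\Theta}}}{\|\mathbf{x}\|_U},\qquad\beta_r^{\mathbf{\Theta}}(\mu):=\max_{\mathbf{x}\in(\mathrm{span}\{\mathbf{u}(\mu)\}+U_r)\setminus\{\mathbf{0}\}}\frac{\|\mathbf{A}(\mu)\mathbf{x}\|_{U_r'}^{\mathbf{\Theta}}}{\|\mathbf{x}\|_U}.$$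 Let $\mathbf{u}_r(\mu)\in U_r$ satisfy $\|\mathbf{b}(\mu)-\mathbf{A}(\mu)\mathbf{u}_r(\mu)\|_{U_r'}^{\mathbf{\Theta}}=0$. If $\alpha_r^{\mathbf{\Theta}}(\mu)>0$, then $$\|\mathbf{u}(\mu)-\mathbf{u}_r(\mu)\|_U\le\Big(1+\frac{\beta_r^{\mathbf{\Theta}}(\mu)}{\alpha_r^{\mathbf{\Theta}}(\mu)}\Big)\|\mathbf{u}(\mu)-\mathbf{P}_{U_r}\mathbf{u}(\mu)\|_U,$$ where $\mathbf{P}_{U_r}$ is the $\langle\cdot,\cdot\rangle_U$-orthogonal projection onto $U_r$.
   Context: $\langle\mathbf{x},\mathbf{y}\rangle=\mathbf{x}^{\mathrm{H}}\mathbf{y}$ is the canonical inner product and $\|\cdot\|$ the Euclidean norm. The semi-norm $\|\cdot\|_{U_r'}^{\mathbf{\Theta}}$ is understood to be used where it is well defined, i.e., when $\mathbf{\Theta}\mathbf{x}\neq\mathbf{0}$ for all nonzero $\mathbf{x}\in U_r$. *)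

theory Defs
  imports "HOL-Analysis.Analysis"
begin

text \<open>Vectors in K^n are modelled as complex^'n whose entries lie in K, where
  K is either the reals (embedded in the complex numbers) or all of the complex numbers.\<close>

definition cinner :: "complex^'n \<Rightarrow> complex^'n \<Rightarrow> complex" where
  "cinner x y = (\<Sum>i\<in>UNIV. cnj (x $ i) * y $ i)"

definition in_K :: "complex set \<Rightarrow> complex^'n \<Rightarrow> bool" where
  "in_K K x \<longleftrightarrow> (\<forall>i. x $ i \<in> K)"

definition mat_in_K :: "complex set \<Rightarrow> complex^'n^'m \<Rightarrow> bool" where
  "mat_in_K K M \<longleftrightarrow> (\<forall>i j. M $ i $ j \<in> K)"

definition hermitian :: "complex^'n^'n \<Rightarrow> bool" where
  "hermitian M \<longleftrightarrow> (\<forall>i j. M $ i $ j = cnj (M $ j $ i))"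

definition pos_def :: "complex^'n^'n \<Rightarrow> bool" where
  "pos_def M \<longleftrightarrow> (\<forall>x. x \<noteq> 0 \<longrightarrow> Re (cinner x (M *v x)) > 0)"

definition K_subspace :: "complex set \<Rightarrow> (complex^'n) set \<Rightarrow> bool" where
  "K_subspace K S \<longleftrightarrow> S \<subseteq> {x. in_K K x} \<and> 0 \<in> S \<and>
     (\<forall>x\<in>S. \<forall>y\<in>S. x + y \<in> S) \<and> (\<forall>c\<in>K. \<forall>x\<in>S. c *s x \<in> S)"

definition inner_U :: "complex^'n^'n \<Rightarrow> complex^'n \<Rightarrow> complex^'n \<Rightarrow> complex" where
  "inner_U R x y = cinner (R *v x) y"

definition norm_U :: "complex^'n^'n \<Rightarrow> complex^'n \<Rightarrow> real" where
  "norm_U R x = sqrt (Re (inner_U R x x))"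

definition dual_norm_Theta ::
  "complex^'n^'n \<Rightarrow> complex^'n^'k \<Rightarrow> (complex^'n) set \<Rightarrow> complex^'n \<Rightarrow> real" where
  "dual_norm_Theta R Theta Ur y =
     (SUP x \<in> Ur - {0}. cmod (cinner (Theta *v (matrix_inv R *v y)) (Theta *v x)) / norm (Theta *v x))"

definition alpha_Theta ::
  "complex^'n^'n \<Rightarrow> complex^'n^'k \<Rightarrow> (complex^'n) set \<Rightarrow> complex^'n^'n \<Rightarrow> real" where
  "alpha_Theta R Theta Ur A =
     (INF x \<in> Ur - {0}. dual_norm_Theta R Theta Ur (A *v x) / norm_U R x)"

definition beta_Theta ::
  "complex set \<Rightarrow> complex^'n^'n \<Rightarrow> complex^'n^'k \<Rightarrow> (complex^'n) set \<Rightarrow> complex^'n^'n \<Rightarrow> complex^'n \<Rightarrow> real" where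
  "beta_Theta K R Theta Ur A u =
     (SUP x \<in> {c *s u + v | c v. c \<in> K \<and> v \<in> Ur} - {0}.
        dual_norm_Theta R Theta Ur (A *v x) / norm_U R x)"

definition proj_U :: "complex^'n^'n \<Rightarrow> (complex^'n) set \<Rightarrow> complex^'n \<Rightarrow> complex^'n" where
  "proj_U R Ur u = (THE p. p \<in> Ur \<and> (\<forall>x\<in>Ur. inner_U R (u - p) x = 0))"

end

theory Submission imports Defs begin

text \<open>Write \<open>p\<close> for the \<open>U\<close>-orthogonal projection of \<open>u\<close>, \<open>e = p - u\<^sub>r \<in> U\<^sub>r\<close> and
  \<open>w = p - u \<in> span{u} + U\<^sub>r\<close>. Since \<open>A e = A w + (b - A u\<^sub>r)\<close> and the dual semi-norm is
  subadditive and vanishes on the Galerkin residual, the inf-sup constant gives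
  \<open>\<alpha> \<parallel>e\<parallel>\<^sub>U \<le> \<parallel>A e\<parallel> \<le> \<parallel>A w\<parallel> \<le> \<beta> \<parallel>w\<parallel>\<^sub>U\<close>. As \<open>u - u\<^sub>r = (u - p) + e\<close> is a \<open>U\<close>-orthogonal
  splitting, \<open>\<parallel>u - u\<^sub>r\<parallel>\<^sub>U \<le> \<parallel>u - p\<parallel>\<^sub>U + \<parallel>e\<parallel>\<^sub>U\<close>, which yields the bound.
  Subadditivity of the semi-norm does not depend on \<open>\<Theta>\<close> being injective on \<open>U\<^sub>r\<close>.\<close>

lemma cinner_add_left: "cinner (x + y) z = cinner x z + cinner y z"
  by (simp add: cinner_def sum.distrib distrib_right)

lemma cinner_add_right: "cinner z (x + y) = cinner z x + cinner z y"
  by (simp add: cinner_def sum.distrib distrib_left)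

lemma cinner_diff_left: "cinner (x - y) z = cinner x z - cinner y z"
  by (simp add: cinner_def sum_subtractf left_diff_distrib)

lemma cinner_diff_right: "cinner z (x - y) = cinner z x - cinner z y"
  by (simp add: cinner_def sum_subtractf right_diff_distrib)

lemma cinner_smult_left: "cinner (c *s x) z = cnj c * cinner x z"
  by (simp add: cinner_def sum_distrib_left mult.assoc)

lemma cinner_smult_right: "cinner z (c *s x) = c * cinner z x"
  by (simp add: cinner_def sum_distrib_left algebra_simps)

lemma cinner_zero_left [simp]: "cinner 0 z = 0"
  by (simp add: cinner_def)

lemma cinner_cnj: "cnj (cinner x y) = cinner y x"
  by (simp add: cinner_def mult.commute)

lemma norm_cinner_le: "cmod (cinner a b) \<le> norm a * norm b"
proof -
  have "cmod (cinner a b) \<le> (\<Sum>i\<in>UNIV. cmod (cnj (a$i) * b$i))"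
    unfolding cinner_def by (rule norm_sum)
  also have "\<dots> = (\<Sum>i\<in>UNIV. \<bar>cmod (a$i)\<bar> * \<bar>cmod (b$i)\<bar>)"
    by (simp add: norm_mult)
  also have "\<dots> \<le> L2_set (\<lambda>i. cmod (a$i)) UNIV * L2_set (\<lambda>i. cmod (b$i)) UNIV"
    by (rule L2_set_mult_ineq)
  also have "\<dots> = norm a * norm b"
    by (simp add: norm_vec_def)
  finally show ?thesis .
qed

lemma cinner_in_Reals:
  assumes "mat_in_K \<real> R" "in_K \<real> a" "in_K \<real> y"
  shows "cinner (R *v a) y \<in> \<real>"
  using assms unfolding cinner_def mat_in_K_def in_K_def matrix_vector_mult_def
  by (auto intro!: sum_in_Reals Reals_mult simp: complex_is_Real_iff)

lemma continuous_on_matrix_vector_mult [continuous_intros]: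
  fixes M :: "complex^'n^'m"
  shows "continuous_on S f \<Longrightarrow> continuous_on S (\<lambda>x. M *v f x)"
  using bounded_linear.continuous_on[OF matrix_vector_mul_bounded_linear, of S f M] by simp

lemma continuous_on_cinner [continuous_intros]:
  fixes f g :: "'b::topological_space \<Rightarrow> complex^'n"
  shows "continuous_on S f \<Longrightarrow> continuous_on S g \<Longrightarrow> continuous_on S (\<lambda>x. cinner (f x) (g x))"
  unfolding cinner_def by (intro continuous_intros)

lemma matrix_vector_mult_smult: "M *v (c *s x) = c *s (M *v (x::complex^'n))"
  by (simp add: vec_eq_iff matrix_vector_mult_def sum_distrib_left algebra_simps)

lemma of_real_smult_eq_scaleR: "complex_of_real r *s x = r *\<^sub>R (x::complex^'n)"
  by (simp add: vec_eq_iff scaleR_conv_of_real[where 'a=complex])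

lemma hermitian_cinner_adjoint:
  assumes "hermitian R"
  shows "cinner (R *v x) y = cinner x (R *v y)"
proof -
  have "cinner (R *v x) y = (\<Sum>i\<in>UNIV. \<Sum>j\<in>UNIV. cnj (R$i$j) * cnj (x$j) * y$i)"
    unfolding cinner_def matrix_vector_mult_def by (simp add: cnj_sum sum_distrib_right)
  also have "\<dots> = (\<Sum>j\<in>UNIV. \<Sum>i\<in>UNIV. cnj (R$i$j) * cnj (x$j) * y$i)"
    by (rule sum.swap)
  also have "\<dots> = (\<Sum>j\<in>UNIV. cnj (x$j) * (\<Sum>i\<in>UNIV. R$j$i * y$i))"
    unfolding sum_distrib_left using assms unfolding hermitian_def
    by (intro sum.cong refl) (metis mult.commute mult.left_commute)
  also have "\<dots> = cinner x (R *v y)"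
    by (simp add: cinner_def matrix_vector_mult_def)
  finally show ?thesis .
qed

lemma hermitian_inner_U_cnj: "hermitian R \<Longrightarrow> inner_U R y x = cnj (inner_U R x y)"
  by (simp add: inner_U_def hermitian_cinner_adjoint cinner_cnj)

lemma pos_def_coercive:
  fixes R :: "complex^'n^'n"
  assumes "pos_def R"
  shows "\<exists>m>0. \<forall>x. m * (norm x)^2 \<le> Re (cinner x (R *v x))"
proof -
  define Q where "Q x = Re (cinner x (R *v x))" for x :: "complex^'n"
  have "continuous_on S Q" for S
    unfolding Q_def by (intro continuous_intros)
  moreover have "sphere (0::complex^'n) 1 \<noteq> {}"
    by simp
  ultimately obtain x0 where x0: "x0 \<in> sphere 0 1" and min: "\<And>y. y \<in> sphere 0 1 \<Longrightarrow> Q x0 \<le> Q y"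
    using continuous_attains_inf[OF compact_sphere] by blast
  have "x0 \<noteq> 0"
    using x0 by auto
  then have "Q x0 > 0"
    using assms unfolding pos_def_def Q_def by blast
  moreover have "Q x0 * (norm x)^2 \<le> Q x" for x
  proof (cases "x = 0")
    case False
    define c where "c = complex_of_real (1 / norm x)"
    have "c *s x \<in> sphere 0 1"
      unfolding c_def of_real_smult_eq_scaleR using False by simp
    then have "Q x0 \<le> Q (c *s x)"
      by (rule min)
    also have "Q (c *s x) = (1 / norm x)^2 * Q x"
      by (simp add: Q_def matrix_vector_mult_smult cinner_smult_left cinner_smult_right c_def
          power2_eq_square)
    finally have "Q x0 \<le> (1 / norm x)^2 * Q x" .
    then show ?thesis
      using False by (simp add: field_simps)
  qed (simp add: Q_def)
  ultimately show ?thesis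
    unfolding Q_def by (metis mult.commute)
qed

lemma Re_inner_U_self: "hermitian R \<Longrightarrow> Re (inner_U R x x) = Re (cinner x (R *v x))"
  by (simp add: inner_U_def hermitian_cinner_adjoint)

lemma Re_inner_U_self_nonneg:
  assumes "hermitian R" "pos_def R"
  shows "0 \<le> Re (inner_U R x x)"
proof -
  obtain m where m: "m > 0" "\<And>x. m * (norm x)^2 \<le> Re (cinner x (R *v x))"
    using pos_def_coercive[OF assms(2)] by blast
  have "0 \<le> m * (norm x)^2"
    using m(1) by simp
  then show ?thesis
    using m(2)[of x] Re_inner_U_self[OF assms(1), of x] by linarith
qed

lemma norm_U_coercive:
  assumes "hermitian R" "pos_def R"
  shows "\<exists>c>0. \<forall>x. c * norm x \<le> norm_U R x"
proof -
  obtain m where m: "m > 0" "\<And>x. m * (norm x)^2 \<le> Re (cinner x (R *v x))"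
    using pos_def_coercive[OF assms(2)] by blast
  have "sqrt m * norm x \<le> norm_U R x" for x
  proof -
    have "sqrt m * norm x = sqrt (m * (norm x)^2)"
      by (simp add: real_sqrt_mult)
    also have "\<dots> \<le> norm_U R x"
      unfolding norm_U_def Re_inner_U_self[OF assms(1)] using m(2) real_sqrt_le_mono by blast
    finally show ?thesis .
  qed
  then show ?thesis
    using m(1) by (intro exI[of _ "sqrt m"]) auto
qed

lemma norm_U_nonneg: "hermitian R \<Longrightarrow> pos_def R \<Longrightarrow> 0 \<le> norm_U R x"
  by (simp add: norm_U_def Re_inner_U_self_nonneg)

lemma norm_U_pos:
  assumes "hermitian R" "pos_def R" "x \<noteq> 0"
  shows "0 < norm_U R x"
proof -
  obtain c where "c > 0" "c * norm x \<le> norm_U R x"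
    using norm_U_coercive[OF assms(1,2)] by blast
  moreover have "0 < c * norm x"
    using \<open>c > 0\<close> assms(3) by simp
  ultimately show ?thesis
    by linarith
qed

lemma norm_U_zero [simp]: "norm_U R 0 = 0"
  by (simp add: norm_U_def inner_U_def)

lemma norm_U_minus_commute: "norm_U R (x - y) = norm_U R (y - x)"
  by (simp add: norm_U_def inner_U_def matrix_vector_mult_diff_distrib cinner_diff_left
      cinner_diff_right algebra_simps)

lemma norm_U_add_le_of_orthogonal:
  assumes "hermitian R" "pos_def R" and orth: "inner_U R x y = 0"
  shows "norm_U R (x + y) \<le> norm_U R x + norm_U R y"
proof -
  have "inner_U R y x = 0"
    using orth hermitian_inner_U_cnj[OF assms(1), of y x] by simp
  then have "inner_U R (x + y) (x + y) = inner_U R x x + inner_U R y y"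
    using orth by (simp add: inner_U_def matrix_vector_right_distrib cinner_add_left cinner_add_right)
  then show ?thesis
    unfolding norm_U_def
    by (simp add: sqrt_add_le_add_sqrt Re_inner_U_self_nonneg assms(1,2))
qed

lemma K_subspace_of_real_smult:
  assumes "K = \<real> \<or> K = UNIV" "K_subspace K S" "x \<in> S"
  shows "complex_of_real r *s x \<in> S"
  using assms unfolding K_subspace_def by auto

lemma K_subspace_diff:
  assumes K: "K = \<real> \<or> K = UNIV" and S: "K_subspace K S" and "x \<in> S" "y \<in> S"
  shows "x - y \<in> S"
proof -
  have "complex_of_real (-1) *s y \<in> S"
    by (rule K_subspace_of_real_smult[OF K S \<open>y \<in> S\<close>])
  then have "x + complex_of_real (-1) *s y \<in> S"
    using S \<open>x \<in> S\<close> unfolding K_subspace_def by blast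
  then show ?thesis
    by (simp add: vec_eq_iff)
qed

lemma K_subspace_imp_subspace:
  assumes K: "K = \<real> \<or> K = UNIV" and S: "K_subspace K S"
  shows "subspace S"
  unfolding subspace_def
proof (intro conjI ballI allI)
  show "0 \<in> S" "\<And>x y. x \<in> S \<Longrightarrow> y \<in> S \<Longrightarrow> x + y \<in> S"
    using S unfolding K_subspace_def by blast+
  show "c *\<^sub>R x \<in> S" if "x \<in> S" for c x
    using K_subspace_of_real_smult[OF K S that, of c] by (simp add: of_real_smult_eq_scaleR)
qed

lemma exists_nearest_point_norm_U:
  fixes R :: "complex^'n^'n"
  assumes herm: "hermitian R" and pd: "pos_def R" and "closed S" "0 \<in> S"
  shows "\<exists>p\<in>S. \<forall>y\<in>S. Re (inner_U R (u - p) (u - p)) \<le> Re (inner_U R (u - y) (u - y))"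
proof -
  obtain m where m: "m > 0" "\<And>x. m * (norm x)^2 \<le> Re (cinner x (R *v x))"
    using pos_def_coercive[OF pd] by blast
  define G where "G x = Re (inner_U R (u - x) (u - x))" for x
  have G_continuous: "continuous_on T G" for T
    unfolding G_def inner_U_def by (intro continuous_intros)
  define T where "T = S \<inter> {x. G x \<le> G 0}"
  have "closed T"
    unfolding T_def using \<open>closed S\<close>
    by (intro closed_Int closed_Collect_le G_continuous continuous_on_const)
  moreover have "bounded T"
    unfolding bounded_iff
  proof (intro exI ballI)
    fix x assume "x \<in> T"
    then have "m * (norm (u - x))^2 \<le> G 0"
      using m(2)[of "u - x"] Re_inner_U_self[OF herm, of "u - x"] unfolding T_def G_def by simp
    then have "norm (u - x) \<le> sqrt (G 0 / m)"
      using m(1) by (intro real_le_rsqrt) (simp add: field_simps)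
    moreover have "norm x \<le> norm u + norm (u - x)"
      using norm_triangle_ineq4[of u "u - x"] by simp
    ultimately show "norm x \<le> norm u + sqrt (G 0 / m)"
      by linarith
  qed
  ultimately have "compact T"
    by (simp add: compact_eq_bounded_closed)
  moreover have "T \<noteq> {}"
    using \<open>0 \<in> S\<close> unfolding T_def by auto
  ultimately obtain p where "p \<in> T" and p_min: "\<And>y. y \<in> T \<Longrightarrow> G p \<le> G y"
    using continuous_attains_inf[of T G] G_continuous by auto
  have "G p \<le> G y" if "y \<in> S" for y
  proof (cases "y \<in> T")
    case False
    then show ?thesis
      using that \<open>p \<in> T\<close> unfolding T_def by simp
  qed (rule p_min)
  moreover have "p \<in> S"
    using \<open>p \<in> T\<close> unfolding T_def by simp
  ultimately show ?thesis
    unfolding G_def by blast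
qed

lemma Re_inner_U_diff_of_real_smult:
  assumes "hermitian R"
  shows "Re (inner_U R (a - complex_of_real s *s y) (a - complex_of_real s *s y)) =
    Re (inner_U R a a) - 2 * s * Re (inner_U R a y) + s^2 * Re (inner_U R y y)"
  using hermitian_inner_U_cnj[OF assms, of a y]
  unfolding inner_U_def
  by (simp add: matrix_vector_mult_diff_distrib matrix_vector_mult_smult cinner_diff_left
      cinner_diff_right cinner_smult_left cinner_smult_right power2_eq_square algebra_simps)

lemma linear_coeff_zero_if_quadratic_nonneg:
  fixes B Q :: real
  assumes Q: "Q \<ge> 0" and nonneg: "\<And>s. 0 \<le> s^2 * Q - 2 * s * B"
  shows "B = 0"
proof -
  have "Q + 1 \<noteq> 0"
    using Q by simp
  then have "(B / (Q + 1))^2 * Q - 2 * (B / (Q + 1)) * B = - (B^2 * (Q + 2) / (Q + 1)^2)"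
    by (simp add: divide_simps power2_eq_square) (simp add: algebra_simps)
  with nonneg have "B^2 * (Q + 2) / (Q + 1)^2 \<le> 0"
    by (metis neg_0_le_iff_le)
  then have "B^2 * (Q + 2) \<le> 0"
    using Q by (simp add: divide_le_0_iff)
  moreover have "Q + 2 > 0"
    using Q by simp
  ultimately have "B^2 \<le> 0"
    by (simp add: mult_le_0_iff)
  then show ?thesis
    by simp
qed

text \<open>A nearest point \<open>p\<close> makes \<open>s \<mapsto> \<parallel>u - p - s y\<parallel>\<^sub>U\<^sup>2\<close> minimal at \<open>s = 0\<close>, so its linear
  coefficient vanishes.\<close>

lemma nearest_point_Re_orthogonal:
  assumes herm: "hermitian R" and pd: "pos_def R" and S: "subspace S"
    and "p \<in> S"
    and nearest: "\<And>y. y \<in> S \<Longrightarrow>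
      Re (inner_U R (u - p) (u - p)) \<le> Re (inner_U R (u - y) (u - y))"
    and "y \<in> S"
  shows "Re (inner_U R (u - p) y) = 0"
proof (rule linear_coeff_zero_if_quadratic_nonneg)
  show "0 \<le> Re (inner_U R y y)"
    by (rule Re_inner_U_self_nonneg[OF herm pd])
  fix s
  have "p + complex_of_real s *s y \<in> S"
    using S \<open>p \<in> S\<close> \<open>y \<in> S\<close> by (simp add: of_real_smult_eq_scaleR subspace_add subspace_scale)
  from nearest[OF this] show "0 \<le> s^2 * Re (inner_U R y y) - 2 * s * Re (inner_U R (u - p) y)"
    using Re_inner_U_diff_of_real_smult[OF herm, of "u - p" s y] by (simp add: diff_diff_eq)
qed

lemma inner_U_zero_if_Re_zero:
  assumes K: "K = \<real> \<or> K = UNIV" and R_K: "mat_in_K K R" and S: "K_subspace K S"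
    and v_K: "in_K K v" and Re_zero: "\<And>y. y \<in> S \<Longrightarrow> Re (inner_U R v y) = 0" and "y \<in> S"
  shows "inner_U R v y = 0"
proof (cases "K = UNIV")
  case True
  then have "\<i> *s y \<in> S"
    using S \<open>y \<in> S\<close> unfolding K_subspace_def by blast
  from Re_zero[OF this] Re_zero[OF \<open>y \<in> S\<close>] show ?thesis
    by (simp add: inner_U_def cinner_smult_right complex_eq_iff)
next
  case False
  then have "K = \<real>"
    using K by blast
  then have "inner_U R v y \<in> \<real>"
    using S R_K v_K \<open>y \<in> S\<close> unfolding inner_U_def K_subspace_def
    by (intro cinner_in_Reals) auto
  with Re_zero[OF \<open>y \<in> S\<close>] show ?thesis
    by (simp add: complex_eq_iff complex_is_Real_iff)
qed

lemma inner_U_orthogonal_unique: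
  assumes K: "K = \<real> \<or> K = UNIV" and herm: "hermitian R" and pd: "pos_def R" and S: "K_subspace K S"
    and "p \<in> S" "q \<in> S"
    and "\<forall>x\<in>S. inner_U R (u - p) x = 0" "\<forall>x\<in>S. inner_U R (u - q) x = 0"
  shows "q = p"
proof -
  have "p - q \<in> S"
    using K_subspace_diff[OF K S] assms(5,6) .
  then have "inner_U R (p - q) (p - q) = 0"
    using assms(7,8) by (simp add: inner_U_def matrix_vector_mult_diff_distrib cinner_diff_left)
  then have "norm_U R (p - q) = 0"
    by (simp add: norm_U_def)
  then show ?thesis
    using norm_U_pos[OF herm pd, of "p - q"] by fastforce
qed

lemma proj_U_characterization:
  assumes K: "K = \<real> \<or> K = UNIV" and R_K: "mat_in_K K R" and herm: "hermitian R" and pd: "pos_def R"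
    and S: "K_subspace K S" and u_K: "in_K K u"
  shows "proj_U R S u \<in> S" and "\<forall>x\<in>S. inner_U R (u - proj_U R S u) x = 0"
proof -
  have "subspace S"
    by (rule K_subspace_imp_subspace[OF K S])
  then obtain p where "p \<in> S"
    and nearest: "\<And>y. y \<in> S \<Longrightarrow> Re (inner_U R (u - p) (u - p)) \<le> Re (inner_U R (u - y) (u - y))"
    using exists_nearest_point_norm_U[OF herm pd closed_subspace] subspace_0 by blast
  have "in_K K (u - p)"
    using K u_K S \<open>p \<in> S\<close> unfolding K_subspace_def in_K_def by auto
  then have orth: "\<forall>x\<in>S. inner_U R (u - p) x = 0"
    using inner_U_zero_if_Re_zero[OF K R_K S]
      nearest_point_Re_orthogonal[OF herm pd \<open>subspace S\<close> \<open>p \<in> S\<close> nearest]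
    by blast
  have "proj_U R S u = p"
    unfolding proj_U_def
    using \<open>p \<in> S\<close> orth inner_U_orthogonal_unique[OF K herm pd S \<open>p \<in> S\<close>]
    by (intro the_equality) auto
  then show "proj_U R S u \<in> S" "\<forall>x\<in>S. inner_U R (u - proj_U R S u) x = 0"
    using \<open>p \<in> S\<close> orth by simp_all
qed

lemma dual_norm_Theta_quotient_le:
  "cmod (cinner (Theta *v (matrix_inv R *v y)) (Theta *v x)) / norm (Theta *v x)
     \<le> norm (Theta *v (matrix_inv R *v y))"
proof (cases "Theta *v x = 0")
  case False
  then show ?thesis
    using norm_cinner_le[of "Theta *v (matrix_inv R *v y)" "Theta *v x"]
    by (simp add: divide_le_eq)
qed simp

lemma dual_norm_Theta_ge:
  assumes "x \<in> S" "x \<noteq> 0"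
  shows "cmod (cinner (Theta *v (matrix_inv R *v y)) (Theta *v x)) / norm (Theta *v x)
     \<le> dual_norm_Theta R Theta S y"
  unfolding dual_norm_Theta_def using assms
  by (intro cSUP_upper bdd_aboveI2[OF dual_norm_Theta_quotient_le]) auto

lemma dual_norm_Theta_le:
  assumes "S - {0} \<noteq> {}"
  shows "dual_norm_Theta R Theta S y \<le> norm (Theta *v (matrix_inv R *v y))"
  unfolding dual_norm_Theta_def using assms
  by (intro cSUP_least dual_norm_Theta_quotient_le)

lemma dual_norm_Theta_nonneg:
  assumes "S - {0} \<noteq> {}"
  shows "0 \<le> dual_norm_Theta R Theta S y"
proof -
  obtain x where "x \<in> S" "x \<noteq> 0"
    using assms by blast
  then show ?thesis
    using dual_norm_Theta_ge[of x S Theta R y] by (meson divide_nonneg_nonneg norm_ge_zero order_trans)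
qed

lemma dual_norm_Theta_zero:
  assumes "S - {0} \<noteq> {}"
  shows "dual_norm_Theta R Theta S 0 = 0"
  using dual_norm_Theta_le[OF assms, of R Theta 0] dual_norm_Theta_nonneg[OF assms, of R Theta 0]
  by simp

lemma dual_norm_Theta_triangle:
  assumes "S - {0} \<noteq> {}"
  shows "dual_norm_Theta R Theta S (y + z) \<le> dual_norm_Theta R Theta S y + dual_norm_Theta R Theta S z"
  unfolding dual_norm_Theta_def [of R Theta S "y + z"]
proof (rule cSUP_least[OF assms])
  fix x assume x: "x \<in> S - {0}"
  let ?q = "\<lambda>y. cmod (cinner (Theta *v (matrix_inv R *v y)) (Theta *v x)) / norm (Theta *v x)"
  have "?q (y + z) \<le> ?q y + ?q z"
    unfolding add_divide_distrib[symmetric]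
    by (intro divide_right_mono)
      (simp_all add: matrix_vector_right_distrib cinner_add_left norm_triangle_ineq)
  also have "\<dots> \<le> dual_norm_Theta R Theta S y + dual_norm_Theta R Theta S z"
    using x by (intro add_mono dual_norm_Theta_ge) auto
  finally show "?q (y + z) \<le> dual_norm_Theta R Theta S y + dual_norm_Theta R Theta S z" .
qed

lemma alpha_Theta_mult_norm_U_le:
  assumes herm: "hermitian R" and pd: "pos_def R" and S: "S - {0} \<noteq> {}" and "x \<in> S"
  shows "alpha_Theta R Theta S A * norm_U R x \<le> dual_norm_Theta R Theta S (A *v x)"
proof (cases "x = 0")
  case True
  then show ?thesis
    using dual_norm_Theta_zero[OF S, of R Theta] by simp
next
  case False
  have "alpha_Theta R Theta S A \<le> dual_norm_Theta R Theta S (A *v x) / norm_U R x"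
    unfolding alpha_Theta_def using \<open>x \<in> S\<close> False
    by (intro cINF_lower bdd_belowI2[where m = 0] divide_nonneg_nonneg
        dual_norm_Theta_nonneg[OF S] norm_U_nonneg[OF herm pd]) auto
  then show ?thesis
    using norm_U_pos[OF herm pd False] by (simp add: le_divide_eq)
qed

lemma dual_norm_Theta_quotient_bounded:
  fixes A :: "complex^'n^'n"
  assumes herm: "hermitian R" and pd: "pos_def R" and S: "S - {0} \<noteq> {}"
  shows "\<exists>B. \<forall>x. x \<noteq> 0 \<longrightarrow> dual_norm_Theta R Theta S (A *v x) / norm_U R x \<le> B"
proof -
  have "bounded_linear (\<lambda>x. Theta *v (matrix_inv R *v (A *v x)))"
    by (intro bounded_linear_compose[OF matrix_vector_mul_bounded_linear]
        matrix_vector_mul_bounded_linear)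
  then obtain C where C: "C > 0" "\<And>x. norm (Theta *v (matrix_inv R *v (A *v x))) \<le> norm x * C"
    using bounded_linear.pos_bounded by blast
  obtain c where c: "c > 0" "\<And>x. c * norm x \<le> norm_U R x"
    using norm_U_coercive[OF herm pd] by blast
  have "dual_norm_Theta R Theta S (A *v x) / norm_U R x \<le> C / c" if "x \<noteq> 0" for x
  proof -
    have "dual_norm_Theta R Theta S (A *v x) * c \<le> (norm x * C) * c"
      using order_trans[OF dual_norm_Theta_le[OF S, of R Theta "A *v x"] C(2)[of x]] c(1)
      by (simp add: mult_right_mono)
    also have "\<dots> = C * (c * norm x)"
      by simp
    also have "\<dots> \<le> C * norm_U R x"
      using C(1) c(2)[of x] by (simp add: mult_left_mono)
    finally show ?thesis
      using c(1) norm_U_pos[OF herm pd that] by (simp add: field_simps)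
  qed
  then show ?thesis
    by blast
qed

lemma dual_norm_Theta_le_beta_Theta:
  assumes herm: "hermitian R" and pd: "pos_def R" and S: "S - {0} \<noteq> {}"
    and "x \<in> {c *s u + v | c v. c \<in> K \<and> v \<in> S}"
  shows "dual_norm_Theta R Theta S (A *v x) \<le> beta_Theta K R Theta S A u * norm_U R x"
proof (cases "x = 0")
  case True
  then show ?thesis
    using dual_norm_Theta_zero[OF S, of R Theta] by simp
next
  case False
  obtain B where "\<And>x. x \<noteq> 0 \<Longrightarrow> dual_norm_Theta R Theta S (A *v x) / norm_U R x \<le> B"
    using dual_norm_Theta_quotient_bounded[OF herm pd S] by blast
  then have "dual_norm_Theta R Theta S (A *v x) / norm_U R x \<le> beta_Theta K R Theta S A u"
    unfolding beta_Theta_def using assms(4) False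
    by (intro cSUP_upper bdd_aboveI2[where M = B]) auto
  then show ?thesis
    using norm_U_pos[OF herm pd False] by (simp add: divide_le_eq)
qed

theorem proposition4p1:
  fixes K :: "complex set"
    and R :: "complex^'n^'n" and A :: "complex^'n^'n" and Theta :: "complex^'n^'k"
    and b u ur :: "complex^'n" and Ur :: "(complex^'n) set"
  assumes K: "K = \<real> \<or> K = UNIV"
    and R_K: "mat_in_K K R" and R_herm: "hermitian R" and R_pd: "pos_def R"
    and A_K: "mat_in_K K A" and b_K: "in_K K b" and u_K: "in_K K u"
    and Theta_K: "mat_in_K K Theta"
    and sol: "A *v u = b"
    and Ur: "K_subspace K Ur"
    and Ur_nontriv: "\<exists>x\<in>Ur. x \<noteq> 0"
    and Theta_inj: "\<forall>x\<in>Ur. x \<noteq> 0 \<longrightarrow> Theta *v x \<noteq> 0"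
    and ur: "ur \<in> Ur"
    and galerkin: "dual_norm_Theta R Theta Ur (b - A *v ur) = 0"
    and alpha_pos: "alpha_Theta R Theta Ur A > 0"
  shows "norm_U R (u - ur) \<le>
    (1 + beta_Theta K R Theta Ur A u / alpha_Theta R Theta Ur A) * norm_U R (u - proj_U R Ur u)"
proof -
  let ?\<alpha> = "alpha_Theta R Theta Ur A" and ?\<beta> = "beta_Theta K R Theta Ur A u"
  let ?D = "dual_norm_Theta R Theta Ur" and ?p = "proj_U R Ur u"
  have Ur_ne: "Ur - {0} \<noteq> {}"
    using Ur_nontriv by blast
  have p: "?p \<in> Ur" "\<forall>x\<in>Ur. inner_U R (u - ?p) x = 0"
    using proj_U_characterization[OF K R_K R_herm R_pd Ur u_K] by blast+
  define e where "e = ?p - ur"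
  have "e \<in> Ur"
    unfolding e_def using K_subspace_diff[OF K Ur p(1) ur] .
  have "?p - u \<in> {c *s u + v | c v. c \<in> K \<and> v \<in> Ur}"
    using K p(1) by (intro CollectI exI[of _ "-1"] exI[of _ ?p]) (auto simp: vec_eq_iff)
  have "?\<alpha> * norm_U R e \<le> ?D (A *v e)"
    by (rule alpha_Theta_mult_norm_U_le[OF R_herm R_pd Ur_ne \<open>e \<in> Ur\<close>])
  also have "A *v e = A *v (?p - u) + (b - A *v ur)"
    using sol by (simp add: e_def matrix_vector_mult_diff_distrib)
  also have "?D \<dots> \<le> ?D (A *v (?p - u)) + ?D (b - A *v ur)"
    by (rule dual_norm_Theta_triangle[OF Ur_ne])
  also have "\<dots> \<le> ?\<beta> * norm_U R (u - ?p)"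
    using dual_norm_Theta_le_beta_Theta[OF R_herm R_pd Ur_ne \<open>?p - u \<in> _\<close>] galerkin
    by (simp add: norm_U_minus_commute)
  finally have e_bound: "norm_U R e \<le> ?\<beta> / ?\<alpha> * norm_U R (u - ?p)"
    using alpha_pos by (simp add: field_simps)
  have "norm_U R (u - ur) = norm_U R ((u - ?p) + e)"
    by (simp add: e_def)
  also have "\<dots> \<le> norm_U R (u - ?p) + norm_U R e"
    using p(2) \<open>e \<in> Ur\<close> by (intro norm_U_add_le_of_orthogonal R_herm R_pd) blast
  also have "\<dots> \<le> (1 + ?\<beta> / ?\<alpha>) * norm_U R (u - ?p)"
    using e_bound by (simp add: algebra_simps)
  finally show ?thesis .
qed

end
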